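(* A forward complete system $\dot x(t)=f(x_t,u(t))$, $y(t)=h(x_t)$ as in the context is OL-IOS if and only if there exist $\beta\in\mathcal{KL}$ and $\rho,\gamma\in\mathcal N$ such that $|y(t,\xi,u)|\le\beta\big(|h(\xi)|,\ \tfrac{t}{1+\rho(\|\xi\|_{\mathcal X})}\big)+\gamma(\|u\|)$ for all $t\ge0$, all $\xi\in\mathcal X^n$ and all $u\in\mathcal M$.
   Context: Fix $\theta>0$; $\mathcal X^k=C([-\theta,0],\mathbb R^k)$ with norm $\|\xi\|_{\mathcal X}=\max_{s\in[-\theta,0]}|\xi(s)|$; $x_t(s)=x(t+s)$. $\mathcal M$: measurable locally essentially bounded $u:\mathbb R_{\ge0}\to\mathbb R^m$, $\|u\|$ the essential supremum on $[0,\infty)$. Classes: $\mathcal N$ = continuous nondecreasing $\sigma:\mathbb R_{\ge0}\to\mathbb R_{\ge0}$, $\sigma(0)=0$; $\mathcal K$ = strictly increasing ones; $\mathcal{KL}$ = $\beta(s,t)$ of class $\mathcal K$ in $s$ and decreasing to $0$ as $t\to\infty$. System: $f:\mathcal X^n\times\mathbb R^m\to\mathbb R^n$ locally Lipschitz, mapping bounded sets to bounded sets; $h:\mathcal X^n\to\mathbb R^p$ continuous with $|h(\xi)|\le\pi(\|\xi\|_{\mathcal X})$ for some $\pi\in\mathcal N$; $x(\cdot,\xi,u)$ unique maximal solution with initial history $\xi$, $y(t,\xi,u)=h(x_t^{\xi,u})$. Forward complete: all solutions exist for all $t\ge0$. IOS: forward complete and there exist $\beta\in\mathcal{KL},\gamma\in\mathcal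 N$ with $|y(t,\xi,u)|\le\beta(\|\xi\|_{\mathcal X},t)+\gamma(\|u\|)$ for all $t\ge0,\xi,u$. OL-IOS: IOS and additionally there is $\sigma\in\mathcal N$ with $|y(t,\xi,u)|\le\max\{\sigma(|h(\xi)|),\sigma(\|u\|)\}$ for all $t\ge0,\xi,u$. *)

theory Defs
  imports "HOL-Analysis.Analysis"
begin

definition classN :: "(real \<Rightarrow> real) \<Rightarrow> bool" where
  "classN \<sigma> \<longleftrightarrow> continuous_on {0..} \<sigma> \<and> mono_on {0..} \<sigma> \<and> \<sigma> 0 = 0 \<and> (\<forall>s\<ge>0. \<sigma> s \<ge> 0)"

definition classK :: "(real \<Rightarrow> real) \<Rightarrow> bool" where
  "classK \<sigma> \<longleftrightarrow> classN \<sigma> \<and> strict_mono_on {0..} \<sigma>"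

definition classKL :: "(real \<Rightarrow> real \<Rightarrow> real) \<Rightarrow> bool" where
  "classKL \<beta> \<longleftrightarrow> continuous_on ({0..} \<times> {0..}) (\<lambda>(s,t). \<beta> s t)
     \<and> (\<forall>t\<ge>0. classK (\<lambda>s. \<beta> s t))
     \<and> (\<forall>s\<ge>0. antimono_on {0..} (\<beta> s) \<and> ((\<beta> s) \<longlongrightarrow> 0) at_top)"

section \<open>State space C([-theta,0], R^n), histories extended by 0 outside [-theta,0]\<close>

definition Xspace :: "real \<Rightarrow> (real \<Rightarrow> 'a::euclidean_space) set" where
  "Xspace \<theta> = {\<xi>. continuous_on {-\<theta>..0} \<xi> \<and> (\<forall>s. s \<notin> {-\<theta>..0} \<longrightarrow> \<xi> s = 0)}"

definition xnorm :: "real \<Rightarrow> (real \<Rightarrow> 'a::euclidean_space) \<Rightarrow> real" where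
  "xnorm \<theta> \<xi> = (SUP s\<in>{-\<theta>..0}. norm (\<xi> s))"

definition seg :: "real \<Rightarrow> (real \<Rightarrow> 'a::euclidean_space) \<Rightarrow> real \<Rightarrow> (real \<Rightarrow> 'a)" where
  "seg \<theta> x t = (\<lambda>s. if -\<theta> \<le> s \<and> s \<le> 0 then x (t + s) else 0)"

definition Mspace :: "(real \<Rightarrow> 'b::euclidean_space) set" where
  "Mspace = {u. u \<in> borel_measurable (restrict_space lebesgue {0..})
      \<and> (\<forall>T. \<exists>B. AE t in lebesgue. 0 \<le> t \<and> t \<le> T \<longrightarrow> norm (u t) \<le> B)}"

definition ess_bounded :: "(real \<Rightarrow> 'b::euclidean_space) \<Rightarrow> bool" where
  "ess_bounded u \<longleftrightarrow> (\<exists>B. AE t in lebesgue. 0 \<le> t \<longrightarrow> norm (u t) \<le> B)"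

text \<open>Essential supremum of |u| on [0,infinity) (meaningful for essentially bounded u).\<close>
definition unorm :: "(real \<Rightarrow> 'b::euclidean_space) \<Rightarrow> real" where
  "unorm u = Inf {B. B \<ge> 0 \<and> (AE t in lebesgue. 0 \<le> t \<longrightarrow> norm (u t) \<le> B)}"

definition f_locally_lipschitz ::
  "real \<Rightarrow> ((real \<Rightarrow> 'a::euclidean_space) \<Rightarrow> 'b::euclidean_space \<Rightarrow> 'a) \<Rightarrow> bool" where
  "f_locally_lipschitz \<theta> f \<longleftrightarrow>
    (\<forall>\<xi>\<in>Xspace \<theta>. \<forall>v. \<exists>r>0. \<exists>L. \<forall>\<xi>1\<in>Xspace \<theta>. \<forall>\<xi>2\<in>Xspace \<theta>. \<forall>v1 v2.
       xnorm \<theta> (\<lambda>s. \<xi>1 s - \<xi> s) < r \<longrightarrow> xnorm \<theta> (\<lambda>s. \<xi>2 s - \<xi> s) < r \<longrightarrow>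
       norm (v1 - v) < r \<longrightarrow> norm (v2 - v) < r \<longrightarrow>
       norm (f \<xi>1 v1 - f \<xi>2 v2) \<le> L * (xnorm \<theta> (\<lambda>s. \<xi>1 s - \<xi>2 s) + norm (v1 - v2)))"

definition f_bounded_on_bounded ::
  "real \<Rightarrow> ((real \<Rightarrow> 'a::euclidean_space) \<Rightarrow> 'b::euclidean_space \<Rightarrow> 'a) \<Rightarrow> bool" where
  "f_bounded_on_bounded \<theta> f \<longleftrightarrow>
    (\<forall>R. \<exists>B. \<forall>\<xi>\<in>Xspace \<theta>. \<forall>v. xnorm \<theta> \<xi> \<le> R \<longrightarrow> norm v \<le> R \<longrightarrow> norm (f \<xi> v) \<le> B)"

definition h_continuous ::
  "real \<Rightarrow> ((real \<Rightarrow> 'a::euclidean_space) \<Rightarrow> 'c::euclidean_space) \<Rightarrow> bool" where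
  "h_continuous \<theta> h \<longleftrightarrow>
    (\<forall>\<xi>\<in>Xspace \<theta>. \<forall>\<epsilon>>0. \<exists>\<delta>>0. \<forall>\<xi>'\<in>Xspace \<theta>.
       xnorm \<theta> (\<lambda>s. \<xi>' s - \<xi> s) < \<delta> \<longrightarrow> norm (h \<xi>' - h \<xi>) < \<epsilon>)"

text \<open>x is a solution on [-theta, infinity) with initial history xi and input u
  (Caratheodory sense, integral form).\<close>
definition is_solution ::
  "real \<Rightarrow> ((real \<Rightarrow> 'a::euclidean_space) \<Rightarrow> 'b::euclidean_space \<Rightarrow> 'a) \<Rightarrow>
   (real \<Rightarrow> 'a) \<Rightarrow> (real \<Rightarrow> 'b) \<Rightarrow> (real \<Rightarrow> 'a) \<Rightarrow> bool" where
  "is_solution \<theta> f \<xi> u x \<longleftrightarrow>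
     (\<forall>s\<in>{-\<theta>..0}. x s = \<xi> s) \<and> continuous_on {-\<theta>..} x \<and>
     (\<forall>t\<ge>0. ((\<lambda>s. f (seg \<theta> x s) (u s)) has_integral (x t - x 0)) {0..t})"

definition forward_complete ::
  "real \<Rightarrow> ((real \<Rightarrow> 'a::euclidean_space) \<Rightarrow> 'b::euclidean_space \<Rightarrow> 'a) \<Rightarrow> bool" where
  "forward_complete \<theta> f \<longleftrightarrow>
     (\<forall>\<xi>\<in>Xspace \<theta>. \<forall>u\<in>Mspace. \<exists>x. is_solution \<theta> f \<xi> u x)"

definition IOS ::
  "real \<Rightarrow> ((real \<Rightarrow> 'a::euclidean_space) \<Rightarrow> 'b::euclidean_space \<Rightarrow> 'a) \<Rightarrow>
   ((real \<Rightarrow> 'a) \<Rightarrow> 'c::euclidean_space) \<Rightarrow> bool" where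
  "IOS \<theta> f h \<longleftrightarrow> forward_complete \<theta> f \<and>
     (\<exists>\<beta> \<gamma>. classKL \<beta> \<and> classN \<gamma> \<and>
        (\<forall>\<xi>\<in>Xspace \<theta>. \<forall>u\<in>Mspace. ess_bounded u \<longrightarrow> (\<forall>x. is_solution \<theta> f \<xi> u x \<longrightarrow>
          (\<forall>t\<ge>0. norm (h (seg \<theta> x t)) \<le> \<beta> (xnorm \<theta> \<xi>) t + \<gamma> (unorm u)))))"

definition OL_IOS ::
  "real \<Rightarrow> ((real \<Rightarrow> 'a::euclidean_space) \<Rightarrow> 'b::euclidean_space \<Rightarrow> 'a) \<Rightarrow>
   ((real \<Rightarrow> 'a) \<Rightarrow> 'c::euclidean_space) \<Rightarrow> bool" where
  "OL_IOS \<theta> f h \<longleftrightarrow> IOS \<theta> f h \<and>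
     (\<exists>\<sigma>. classN \<sigma> \<and>
        (\<forall>\<xi>\<in>Xspace \<theta>. \<forall>u\<in>Mspace. ess_bounded u \<longrightarrow> (\<forall>x. is_solution \<theta> f \<xi> u x \<longrightarrow>
          (\<forall>t\<ge>0. norm (h (seg \<theta> x t)) \<le> max (\<sigma> (norm (h \<xi>))) (\<sigma> (unorm u))))))"

end

(*
  If the system is OL-IOS, every output is bounded both by beta(||xi||, t) + gamma(||u||) and by
  sigma(|h xi|) + sigma(||u||), so its transient part is at most
  min(beta(||xi||, t), sigma(|h xi|) + |h xi|). Rescaling time by 1 + rho(||xi||) for a suitable
  rho in N makes the decay of beta(s, .) uniform in s: D(tau) * beta(s, tau * (1 + rho s)) <= 1
  for an unbounded D in N. The minimum of a and 1/D(tau) is dominated by the harmonic mean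
  2a / (1 + a D(tau)), which is a KL function of (a, tau).
  Conversely, |h xi| <= pi(||xi||) turns the rescaled estimate into an IOS estimate with the KL
  function beta(pi s + s, t / (1 + rho s)), and evaluating it at t = 0 bounds the output by
  max(sigma(|h xi|), sigma(||u||)) with sigma = 2 (beta(., 0) + gamma).
*)

theory Submission
  imports Defs
begin

section \<open>Comparison functions\<close>

lemma classN_continuous: "classN \<sigma> \<Longrightarrow> continuous_on {0..} \<sigma>"
  unfolding classN_def by simp

lemma classN_nonneg: "classN \<sigma> \<Longrightarrow> 0 \<le> s \<Longrightarrow> 0 \<le> \<sigma> s"
  unfolding classN_def by simp

lemma classN_mono: "classN \<sigma> \<Longrightarrow> 0 \<le> s \<Longrightarrow> s \<le> s' \<Longrightarrow> \<sigma> s \<le> \<sigma> s'"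
  unfolding classN_def by (auto intro: mono_onD)

lemma classN_add: "classN \<sigma> \<Longrightarrow> classN \<sigma>' \<Longrightarrow> classN (\<lambda>s. \<sigma> s + \<sigma>' s)"
  unfolding classN_def by (auto intro!: continuous_on_add add_mono simp: mono_on_def)

lemma classN_cmult: "classN \<sigma> \<Longrightarrow> 0 \<le> c \<Longrightarrow> classN (\<lambda>s. c * \<sigma> s)"
  unfolding classN_def by (auto intro!: continuous_on_mult_left mult_left_mono simp: mono_on_def)

lemma classN_id: "classN (\<lambda>s. s)"
  unfolding classN_def by (simp add: mono_on_def continuous_on_id)

lemma classK_add_id:
  assumes "classN \<sigma>"
  shows "classK (\<lambda>s. \<sigma> s + s)"
  unfolding classK_def
proof
  show "classN (\<lambda>s. \<sigma> s + s)"
    by (rule classN_add[OF assms classN_id])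
  show "strict_mono_on {0..} (\<lambda>s. \<sigma> s + s)"
    by (intro strict_mono_onI add_le_less_mono classN_mono[OF assms]) auto
qed

lemma classKL_continuous: "classKL \<beta> \<Longrightarrow> continuous_on ({0..} \<times> {0..}) (\<lambda>(s, t). \<beta> s t)"
  unfolding classKL_def by simp

lemma classKL_classN: "classKL \<beta> \<Longrightarrow> 0 \<le> t \<Longrightarrow> classN (\<lambda>s. \<beta> s t)"
  unfolding classKL_def classK_def by simp

lemma classKL_zero: "classKL \<beta> \<Longrightarrow> 0 \<le> t \<Longrightarrow> \<beta> 0 t = 0"
  using classKL_classN[of \<beta> t] unfolding classN_def by simp

lemma classKL_nonneg:
  assumes "classKL \<beta>" "0 \<le> s" "0 \<le> t"
  shows "0 \<le> \<beta> s t"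
  using classKL_classN[OF assms(1,3)] assms(2) by (rule classN_nonneg)

lemma classKL_mono:
  assumes "classKL \<beta>" "0 \<le> t" "0 \<le> s" "s \<le> s'"
  shows "\<beta> s t \<le> \<beta> s' t"
  using classKL_classN[OF assms(1,2)] assms(3,4) by (rule classN_mono)

lemma classKL_strict_mono:
  assumes "classKL \<beta>" "0 \<le> t" "0 \<le> s" "s < s'"
  shows "\<beta> s t < \<beta> s' t"
proof -
  have "strict_mono_on {0..} (\<lambda>s. \<beta> s t)"
    using assms(1,2) unfolding classKL_def classK_def by simp
  then show ?thesis
    by (rule strict_mono_onD) (use assms in auto)
qed

lemma classKL_antimono:
  assumes "classKL \<beta>" "0 \<le> s" "0 \<le> t" "t \<le> t'"
  shows "\<beta> s t' \<le> \<beta> s t"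
proof -
  have "antimono_on {0..} (\<beta> s)"
    using assms(1,2) unfolding classKL_def by simp
  then show ?thesis
    by (rule monotone_onD) (use assms in auto)
qed

lemma classKL_tendsto_0: "classKL \<beta> \<Longrightarrow> 0 \<le> s \<Longrightarrow> (\<beta> s \<longlongrightarrow> 0) at_top"
  unfolding classKL_def by simp

lemma classKLI:
  assumes cont: "continuous_on ({0..} \<times> {0..}) (\<lambda>(s, t). \<beta> s t)"
    and zero: "\<And>t. 0 \<le> t \<Longrightarrow> \<beta> 0 t = 0"
    and strict_mono: "\<And>s s' t. 0 \<le> s \<Longrightarrow> s < s' \<Longrightarrow> 0 \<le> t \<Longrightarrow> \<beta> s t < \<beta> s' t"
    and antimono: "\<And>s t t'. 0 \<le> s \<Longrightarrow> 0 \<le> t \<Longrightarrow> t \<le> t' \<Longrightarrow> \<beta> s t' \<le> \<beta> s t"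
    and lim: "\<And>s. 0 \<le> s \<Longrightarrow> (\<beta> s \<longlongrightarrow> 0) at_top"
  shows "classKL \<beta>"
  unfolding classKL_def
proof (intro conjI allI impI)
  fix t :: real
  assume t: "0 \<le> t"
  have "continuous_on {0..} ((\<lambda>(s, t). \<beta> s t) \<circ> (\<lambda>s. (s, t)))"
    by (rule continuous_on_compose[OF continuous_on_Pair[OF continuous_on_id continuous_on_const]
          continuous_on_subset[OF cont]]) (use t in auto)
  then have "continuous_on {0..} (\<lambda>s. \<beta> s t)"
    by (simp add: o_def)
  moreover have "strict_mono_on {0..} (\<lambda>s. \<beta> s t)"
    using strict_mono t by (intro strict_mono_onI) auto
  moreover have "0 \<le> \<beta> s t" if "0 \<le> s" for s
    using zero[OF t] strict_mono[of 0 s t] that t by (cases "s = 0") auto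
  ultimately show "classK (\<lambda>s. \<beta> s t)"
    unfolding classK_def classN_def using zero[OF t] by (simp add: strict_mono_on_imp_mono_on)
next
  fix s :: real
  assume "0 \<le> s"
  then show "antimono_on {0..} (\<beta> s)"
    using antimono by (intro monotone_onI) auto
  show "(\<beta> s \<longlongrightarrow> 0) at_top"
    using \<open>0 \<le> s\<close> by (rule lim)
qed (fact cont)

lemma classKL_comp_time_change:
  assumes KL: "classKL \<beta>" and K: "classK \<alpha>"
    and w_cont: "continuous_on ({0..} \<times> {0..}) (\<lambda>(s, t). w s t)"
    and w_nonneg: "\<And>s t. 0 \<le> s \<Longrightarrow> 0 \<le> t \<Longrightarrow> 0 \<le> w s t"
    and w_mono: "\<And>s t t'. 0 \<le> s \<Longrightarrow> 0 \<le> t \<Longrightarrow> t \<le> t' \<Longrightarrow> w s t \<le> w s t'"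
    and w_antimono: "\<And>s s' t. 0 \<le> s \<Longrightarrow> s \<le> s' \<Longrightarrow> 0 \<le> t \<Longrightarrow> w s' t \<le> w s t"
    and w_lim: "\<And>s. 0 \<le> s \<Longrightarrow> filterlim (w s) at_top at_top"
  shows "classKL (\<lambda>s t. \<beta> (\<alpha> s) (w s t))"
proof (rule classKLI)
  have \<alpha>: "continuous_on {0..} \<alpha>" "\<alpha> 0 = 0" "\<And>s. 0 \<le> s \<Longrightarrow> 0 \<le> \<alpha> s"
    using K unfolding classK_def classN_def by auto
  have \<alpha>_less: "\<alpha> s < \<alpha> s'" if "0 \<le> s" "s < s'" for s s'
    using K that unfolding classK_def by (intro strict_mono_onD[of "{0..}" \<alpha>]) auto
  have "continuous_on ({0..} \<times> {0..}) (\<lambda>p. \<alpha> (fst p))"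
    by (rule continuous_on_compose2[OF \<alpha>(1) continuous_on_fst[OF continuous_on_id]]) auto
  moreover have "continuous_on ({0..} \<times> {0..}) (\<lambda>p. w (fst p) (snd p))"
    using w_cont by (simp add: case_prod_beta')
  ultimately have inner_cont:
    "continuous_on ({0..} \<times> {0..}) (\<lambda>p. (\<alpha> (fst p), w (fst p) (snd p)))"
    by (rule continuous_on_Pair)
  have inner_range: "(\<lambda>p. (\<alpha> (fst p), w (fst p) (snd p))) ` ({0..} \<times> {0..}) \<subseteq> {0..} \<times> {0..}"
    by (rule image_subsetI) (simp add: mem_Times_iff \<alpha>(3) w_nonneg)
  show "continuous_on ({0..} \<times> {0..}) (\<lambda>(s, t). \<beta> (\<alpha> s) (w s t))"
    using continuous_on_compose2[OF classKL_continuous[OF KL] inner_cont inner_range]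
    by (simp add: case_prod_beta')
  show "\<beta> (\<alpha> 0) (w 0 t) = 0" if "0 \<le> t" for t
    using classKL_zero[OF KL w_nonneg[OF order_refl that]] \<alpha>(2) by simp
  show "\<beta> (\<alpha> s) (w s t) < \<beta> (\<alpha> s') (w s' t)" if "0 \<le> s" "s < s'" "0 \<le> t" for s s' t
  proof -
    have "0 \<le> \<alpha> s" "0 \<le> w s' t" "w s' t \<le> w s t"
      using \<alpha>(3)[of s] w_nonneg[of s' t] w_antimono[of s s' t] that by simp_all
    then have "\<beta> (\<alpha> s) (w s t) \<le> \<beta> (\<alpha> s) (w s' t)"
      by (rule classKL_antimono[OF KL])
    also have "\<dots> < \<beta> (\<alpha> s') (w s' t)"
      using \<open>0 \<le> w s' t\<close> \<open>0 \<le> \<alpha> s\<close> \<alpha>_less[OF that(1,2)]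
      by (rule classKL_strict_mono[OF KL])
    finally show ?thesis .
  qed
  show "\<beta> (\<alpha> s) (w s t') \<le> \<beta> (\<alpha> s) (w s t)" if "0 \<le> s" "0 \<le> t" "t \<le> t'" for s t t'
    using \<alpha>(3)[OF that(1)] w_nonneg[OF that(1,2)] w_mono[OF that]
    by (rule classKL_antimono[OF KL])
  show "((\<lambda>t. \<beta> (\<alpha> s) (w s t)) \<longlongrightarrow> 0) at_top" if "0 \<le> s" for s
    using filterlim_compose[OF classKL_tendsto_0[OF KL \<alpha>(3)[OF that]] w_lim[OF that]] .
qed

text \<open>2 x / (1 + x d) is the harmonic mean of x and 1 / d.\<close>
lemma classKL_harmonic_mean: "classKL (\<lambda>x d. 2 * x / (1 + x * d))"
proof (rule classKLI)
  have pos: "0 < 1 + x * d" if "0 \<le> x" "0 \<le> d" for x d :: real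
    using that by (simp add: add_pos_nonneg)
  have "\<forall>p\<in>{0..} \<times> {0..}. 1 + fst p * snd p \<noteq> (0::real)"
    using pos by (fastforce simp: mem_Times_iff)
  then have "continuous_on ({0..} \<times> {0..}) (\<lambda>p::real \<times> real. 2 * fst p / (1 + fst p * snd p))"
    by (intro continuous_intros)
  then show "continuous_on ({0..} \<times> {0..}) (\<lambda>(x, d). 2 * x / (1 + x * d :: real))"
    by (simp add: case_prod_beta')
  show "2 * 0 / (1 + 0 * d) = 0" for d :: real
    by simp
  show "2 * x / (1 + x * d) < 2 * x' / (1 + x' * d)" if "0 \<le> x" "x < x'" "0 \<le> d" for x x' d :: real
  proof -
    have "2 * x * (1 + x' * d) < 2 * x' * (1 + x * d)"
      using that by (simp add: algebra_simps)
    then show ?thesis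
      using pos[of x d] pos[of x' d] that by (simp add: divide_simps)
  qed
  show "2 * x / (1 + x * d') \<le> 2 * x / (1 + x * d)" if "0 \<le> x" "0 \<le> d" "d \<le> d'" for x d d' :: real
    using that pos[of x d] pos[of x d']
    by (intro divide_left_mono mult_left_mono add_left_mono) auto
  show "((\<lambda>d. 2 * x / (1 + x * d)) \<longlongrightarrow> 0) at_top" if "0 \<le> x" for x :: real
  proof (cases "x = 0")
    case False
    with that have "filterlim (\<lambda>d. 1 + x * d) at_top at_top"
      by (intro filterlim_tendsto_add_at_top[OF tendsto_const]
          filterlim_tendsto_pos_mult_at_top[OF tendsto_const _ filterlim_ident]) auto
    then show ?thesis
      by (intro tendsto_divide_0[OF tendsto_const] filterlim_at_top_imp_at_infinity)
  qed simp
qed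

lemma min_le_harmonic_mean:
  fixes a b d :: real
  assumes "0 \<le> a" "0 \<le> d" "d * b \<le> 1"
  shows "min b a \<le> 2 * a / (1 + a * d)"
proof (cases "a * d \<le> 1")
  case True
  have "a * (1 + a * d) \<le> 2 * a"
    using mult_left_mono[OF True assms(1)] by (simp add: algebra_simps)
  then have "a \<le> 2 * a / (1 + a * d)"
    using assms by (simp add: pos_le_divide_eq add_pos_nonneg mult.commute)
  then show ?thesis
    by simp
next
  case False
  then have "0 < d"
    using assms by (cases "d = 0") auto
  then have "b \<le> 1 / d"
    using assms by (simp add: divide_simps mult.commute)
  also have "1 / d \<le> 2 * a / (1 + a * d)"
    using False \<open>0 < d\<close> assms by (simp add: divide_simps algebra_simps)
  finally show ?thesis
    by simp
qed

lemma classKL_time_rescaled: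
  assumes KL: "classKL \<beta>" and K: "classK \<alpha>" and N: "classN \<rho>"
  shows "classKL (\<lambda>s t. \<beta> (\<alpha> s) (t / (1 + \<rho> s)))"
proof (rule classKL_comp_time_change[OF KL K])
  have pos: "0 < 1 + \<rho> s" if "0 \<le> s" for s
    using classN_nonneg[OF N that] by simp
  have "continuous_on ({0..} \<times> {0..}) (\<lambda>p::real \<times> real. \<rho> (fst p))"
    by (rule continuous_on_compose2[OF classN_continuous[OF N]
          continuous_on_fst[OF continuous_on_id]]) auto
  moreover have "\<forall>p\<in>{0..} \<times> {0..}. 1 + \<rho> (fst p) \<noteq> 0"
    using pos by (fastforce simp: mem_Times_iff)
  ultimately have "continuous_on ({0..} \<times> {0..}) (\<lambda>p::real \<times> real. snd p / (1 + \<rho> (fst p)))"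
    by (intro continuous_intros)
  then show "continuous_on ({0..} \<times> {0..}) (\<lambda>(s, t). t / (1 + \<rho> s))"
    by (simp add: case_prod_beta')
  show "0 \<le> t / (1 + \<rho> s)" if "0 \<le> s" "0 \<le> t" for s t
    using pos[OF that(1)] that(2) by simp
  show "t / (1 + \<rho> s) \<le> t' / (1 + \<rho> s)" if "0 \<le> s" "0 \<le> t" "t \<le> t'" for s t t'
    using pos[OF that(1)] that(3) by (simp add: divide_right_mono)
  show "t / (1 + \<rho> s') \<le> t / (1 + \<rho> s)" if "0 \<le> s" "s \<le> s'" "0 \<le> t" for s s' t
    using pos[OF that(1)] classN_mono[OF N that(1,2)] that(3) by (simp add: divide_left_mono)
  show "filterlim (\<lambda>t. t / (1 + \<rho> s)) at_top at_top" if "0 \<le> s" for s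
    using filterlim_at_top_mult_tendsto_pos[OF tendsto_const _ filterlim_ident,
        of "inverse (1 + \<rho> s)"] pos[OF that]
    by (simp add: divide_inverse)
qed

lemma classKL_add_classN_le_max:
  assumes KL: "classKL \<beta>" and N: "classN \<gamma>" and "0 \<le> r" "0 \<le> v" "0 \<le> t"
  shows "\<beta> r t + \<gamma> v \<le> max (2 * (\<beta> r 0 + \<gamma> r)) (2 * (\<beta> v 0 + \<gamma> v))"
proof -
  have "\<beta> r t \<le> \<beta> r 0"
    using assms by (intro classKL_antimono[OF KL]) auto
  moreover have "0 \<le> \<beta> r 0" "0 \<le> \<beta> v 0" "0 \<le> \<gamma> r" "0 \<le> \<gamma> v"
    using assms classKL_nonneg[OF KL] classN_nonneg[OF N] by auto
  ultimately show ?thesis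
    by (simp add: max_def)
qed

section \<open>Majorants and minorants of monotone functions\<close>

lemma continuous_on_atLeast_if_atLeastAtMost:
  fixes F :: "real \<Rightarrow> 'a::topological_space"
  assumes "\<And>b. a \<le> b \<Longrightarrow> continuous_on {a..b} F"
  shows "continuous_on {a..} F"
  unfolding continuous_on_eq_continuous_within
proof
  fix x
  assume "x \<in> {a..}"
  then have "continuous (at x within {a..x + 1}) F"
    using assms[of "x + 1"] by (simp add: continuous_on_eq_continuous_within)
  moreover have "at x within {a..} = at x within {a..x + 1}"
    by (rule at_within_nhd[of _ "{..<x + 1}"]) auto
  ultimately show "continuous (at x within {a..}) F"
    by simp
qed

lemma integral_mono_fun_bounds:
  fixes n :: "real \<Rightarrow> real"
  assumes "mono n" "a \<le> b"
  shows "(b - a) * n a \<le> integral {a..b} n" and "integral {a..b} n \<le> (b - a) * n b"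
proof -
  have int: "n integrable_on {a..b}"
    by (rule integrable_on_mono_on[OF mono_imp_mono_on[OF assms(1)]])
  have "integral {a..b} (\<lambda>_. n a) \<le> integral {a..b} n"
    by (rule integral_le[OF _ int]) (auto intro: monoD[OF assms(1)])
  then show "(b - a) * n a \<le> integral {a..b} n"
    using assms(2) by simp
  have "integral {a..b} n \<le> integral {a..b} (\<lambda>_. n b)"
    by (rule integral_le[OF int]) (auto intro: monoD[OF assms(1)])
  then show "integral {a..b} n \<le> (b - a) * n b"
    using assms(2) by simp
qed

lemma integral_split_mono_fun:
  fixes n :: "real \<Rightarrow> real"
  assumes "mono n" "0 \<le> a" "a \<le> b"
  shows "integral {0..b} n = integral {0..a} n + integral {a..b} n"
  using Henstock_Kurzweil_Integration.integral_combine[OF assms(2,3)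
      integrable_on_mono_on[OF mono_imp_mono_on[OF assms(1)]]]
  by (rule sym)

lemma classN_integral:
  fixes n :: "real \<Rightarrow> real"
  assumes mono: "mono n" and nonneg: "\<And>x. 0 \<le> x \<Longrightarrow> 0 \<le> n x"
  shows "classN (\<lambda>t. integral {0..t} n)"
  unfolding classN_def
proof (intro conjI allI impI)
  have int: "n integrable_on {a..b}" for a b
    by (rule integrable_on_mono_on[OF mono_imp_mono_on[OF mono]])
  show "continuous_on {0..} (\<lambda>t. integral {0..t} n)"
    by (intro continuous_on_atLeast_if_atLeastAtMost indefinite_integral_continuous_1 int)
  show "mono_on {0..} (\<lambda>t. integral {0..t} n)"
  proof (rule mono_onI)
    fix a b :: real
    assume "a \<in> {0..}" "b \<in> {0..}" "a \<le> b"
    moreover have "0 \<le> (b - a) * n a"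
      using \<open>a \<le> b\<close> \<open>a \<in> {0..}\<close> nonneg[of a] by simp
    ultimately show "integral {0..a} n \<le> integral {0..b} n"
      using integral_split_mono_fun[OF mono, of a b] integral_mono_fun_bounds(1)[OF mono, of a b]
      by simp
  qed
  show "0 \<le> integral {0..t} n" for t
    by (rule integral_nonneg[OF int]) (simp add: nonneg)
qed simp

text \<open>Since m is nondecreasing, the integral of m (x + 1) over [s - 1, s] already dominates m s.\<close>
lemma mono_classN_majorant:
  fixes m :: "real \<Rightarrow> real"
  assumes mono: "mono m" and nonneg: "\<And>x. 0 \<le> x \<Longrightarrow> 0 \<le> m x"
  obtains \<rho> where "classN \<rho>" "\<And>s. 0 \<le> s \<Longrightarrow> m s \<le> m 1 + \<rho> s"
proof -
  define n where "n x = m (x + 1)" for x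
  have n_mono: "mono n"
    unfolding n_def using mono by (auto simp: mono_def)
  define \<rho> where "\<rho> t = integral {0..t} n" for t
  have \<rho>: "classN \<rho>"
    unfolding \<rho>_def n_def by (rule classN_integral[OF n_mono[unfolded n_def]]) (simp add: nonneg)
  have "m s \<le> m 1 + \<rho> s" if "0 \<le> s" for s
  proof (cases "1 \<le> s")
    case True
    have "m s \<le> integral {s - 1..s} n"
      using integral_mono_fun_bounds(1)[OF n_mono, of "s - 1" s] by (simp add: n_def)
    also have "\<dots> \<le> \<rho> s"
      using integral_split_mono_fun[OF n_mono, of "s - 1" s] classN_nonneg[OF \<rho>, of "s - 1"] True
      by (simp add: \<rho>_def)
    finally show ?thesis
      using nonneg[of 1] by simp
  next
    case False
    then have "m s \<le> m 1"
      by (intro monoD[OF mono]) simp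
    then show ?thesis
      using classN_nonneg[OF \<rho> that] by simp
  qed
  with \<rho> show ?thesis
    by (rule that)
qed

text \<open>Dividing by t + 1 rather than t keeps the average continuous at 0 and below n.\<close>
definition running_average :: "(real \<Rightarrow> real) \<Rightarrow> real \<Rightarrow> real" where
  "running_average n t = integral {0..t} n / (t + 1)"

context
  fixes n :: "real \<Rightarrow> real"
  assumes mono: "mono n" and nonneg: "\<And>x. 0 \<le> x \<Longrightarrow> 0 \<le> n x"
begin

lemma integral_le_mult:
  assumes "0 \<le> t"
  shows "integral {0..t} n \<le> t * n t"
  using integral_mono_fun_bounds(2)[OF mono assms] by simp

lemma running_average_le: "0 \<le> t \<Longrightarrow> running_average n t \<le> n t"
  using integral_le_mult[of t] nonneg[of t]
  by (simp add: running_average_def pos_divide_le_eq algebra_simps)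

lemma classN_running_average: "classN (running_average n)"
proof -
  let ?F = "\<lambda>t. integral {0..t} n"
  have F: "classN ?F"
    by (rule classN_integral[OF mono nonneg])
  have "mono_on {0..} (running_average n)"
  proof (rule mono_onI)
    fix a b :: real
    assume "a \<in> {0..}" "b \<in> {0..}" "a \<le> b"
    then have a: "0 \<le> a" and "a \<le> b"
      by auto
    have "?F a * (b + 1) = ?F a * (a + 1) + (b - a) * ?F a"
      by (simp add: algebra_simps)
    also have "\<dots> \<le> ?F a * (a + 1) + (b - a) * ((a + 1) * n a)"
      using integral_le_mult[OF a] nonneg[OF a] \<open>a \<le> b\<close>
      by (intro add_left_mono mult_left_mono) (auto simp: algebra_simps)
    also have "\<dots> = (?F a + (b - a) * n a) * (a + 1)"
      by (simp add: algebra_simps)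
    also have "\<dots> \<le> ?F b * (a + 1)"
      using integral_split_mono_fun[OF mono a \<open>a \<le> b\<close>]
        integral_mono_fun_bounds(1)[OF mono \<open>a \<le> b\<close>] a
      by (intro mult_right_mono) auto
    finally show "running_average n a \<le> running_average n b"
      using a \<open>a \<le> b\<close> by (simp add: running_average_def field_simps)
  qed
  moreover have "continuous_on {0..} (running_average n)"
    using classN_continuous[OF F] unfolding running_average_def
    by (intro continuous_on_divide continuous_on_add continuous_on_id continuous_on_const) auto
  ultimately show ?thesis
    using F unfolding classN_def running_average_def by simp
qed

lemma running_average_ge: "1 \<le> t \<Longrightarrow> n (t / 2) / 4 \<le> running_average n t"
proof -
  assume t: "1 \<le> t"
  have "0 \<le> n (t / 2)"
    using nonneg t by simp
  have "n (t / 2) / 4 * (t + 1) \<le> n (t / 2) / 4 * (2 * t)"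
    using \<open>0 \<le> n (t / 2)\<close> t by (intro mult_left_mono) auto
  also have "\<dots> = (t / 2) * n (t / 2)"
    by simp
  also have "\<dots> \<le> integral {0..t} n"
    using integral_split_mono_fun[OF mono, of "t / 2" t]
      integral_mono_fun_bounds(1)[OF mono, of "t / 2" t]
      classN_nonneg[OF classN_integral[OF mono nonneg], of "t / 2"] t
    by simp
  finally show ?thesis
    using t by (simp add: running_average_def pos_le_divide_eq)
qed

lemma filterlim_running_average:
  assumes "filterlim n at_top at_top"
  shows "filterlim (running_average n) at_top at_top"
proof -
  have half: "filterlim (\<lambda>t::real. t * (1 / 2)) at_top at_top"
    by (rule filterlim_at_top_mult_tendsto_pos[OF tendsto_const _ filterlim_ident]) simp
  have "filterlim (\<lambda>t. n (t * (1 / 2)) * (1 / 4)) at_top at_top"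
    by (rule filterlim_at_top_mult_tendsto_pos[OF tendsto_const _ filterlim_compose[OF assms half]])
      simp
  then have "filterlim (\<lambda>t. n (t / 2) / 4) at_top at_top"
    by simp
  then show ?thesis
    by (rule filterlim_at_top_mono) (rule eventually_at_top_linorderI, rule running_average_ge)
qed

end

section \<open>Uniform decay of KL functions after rescaling time\<close>

definition threshold_count :: "(nat \<Rightarrow> real) \<Rightarrow> real \<Rightarrow> real" where
  "threshold_count R t = real (card {j. R j \<le> t})"

context
  fixes R :: "nat \<Rightarrow> real"
  assumes R_ge: "\<And>j. real j \<le> R j"
begin

lemma finite_thresholds_le: "finite {j. R j \<le> t}"
proof (rule finite_subset)
  show "{j. R j \<le> t} \<subseteq> {..nat \<lceil>t\<rceil>}"
  proof
    fix j
    assume "j \<in> {j. R j \<le> t}"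
    then have "R j \<le> t"
      by simp
    then have "real j \<le> real (nat \<lceil>t\<rceil>)"
      using R_ge[of j] real_nat_ceiling_ge[of t] by linarith
    then show "j \<in> {..nat \<lceil>t\<rceil>}"
      by simp
  qed
qed simp

lemma mono_threshold_count: "mono (threshold_count R)"
proof (rule monoI)
  fix t t' :: real
  assume "t \<le> t'"
  then have "{j. R j \<le> t} \<subseteq> {j. R j \<le> t'}"
    by auto
  then show "threshold_count R t \<le> threshold_count R t'"
    using finite_thresholds_le by (simp add: threshold_count_def card_mono)
qed

lemma filterlim_threshold_count:
  assumes "mono R"
  shows "filterlim (threshold_count R) at_top at_top"
  unfolding filterlim_at_top
proof
  fix Z :: real
  have "Z \<le> threshold_count R t" if "R (nat \<lceil>Z\<rceil>) \<le> t" for t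
  proof -
    have "{..nat \<lceil>Z\<rceil>} \<subseteq> {j. R j \<le> t}"
      using that monoD[OF assms] by force
    then have "card {..nat \<lceil>Z\<rceil>} \<le> card {j. R j \<le> t}"
      by (rule card_mono[OF finite_thresholds_le])
    then show ?thesis
      by (simp add: threshold_count_def) linarith
  qed
  then show "eventually (\<lambda>t. Z \<le> threshold_count R t) at_top"
    by (rule eventually_at_top_linorderI)
qed

lemma threshold_count_mult_le_1:
  assumes y_le: "\<And>j. R j \<le> t \<Longrightarrow> y \<le> 1 / (real j + 1)"
  shows "threshold_count R t * y \<le> 1"
proof (cases "{j. R j \<le> t} = {}")
  case False
  define j where "j = Max {j. R j \<le> t}"
  have "y \<le> 1 / (real j + 1)"
    using Max_in[OF finite_thresholds_le False] by (intro y_le) (simp add: j_def)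
  moreover have "threshold_count R t \<le> real j + 1"
    using card_le_Suc_Max[OF finite_thresholds_le[of t]]
    by (simp add: threshold_count_def j_def flip: of_nat_Suc)
  ultimately show ?thesis
  proof (cases "0 \<le> y")
    case True
    with \<open>y \<le> 1 / (real j + 1)\<close> \<open>threshold_count R t \<le> real j + 1\<close>
    have "threshold_count R t * y \<le> (real j + 1) * (1 / (real j + 1))"
      by (intro mult_mono) (auto simp: threshold_count_def)
    then show ?thesis
      by simp
  next
    case False
    then have "threshold_count R t * y \<le> 0"
      by (intro mult_nonneg_nonpos) (auto simp: threshold_count_def)
    then show ?thesis
      by simp
  qed
qed (simp add: threshold_count_def)

end

lemma classKL_decay_thresholds:
  assumes KL: "classKL \<beta>"
  obtains S :: "nat \<Rightarrow> real" where "mono S" "\<And>k. real k + 1 \<le> S k"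
    "\<And>s t j. 0 \<le> s \<Longrightarrow> S j \<le> t \<Longrightarrow> S (nat \<lceil>s\<rceil>) \<le> t \<Longrightarrow> \<beta> s t \<le> 1 / (real j + 1)"
proof -
  have "\<exists>T. \<forall>t\<ge>T. \<beta> (real k) t \<le> 1 / (real k + 1)" for k :: nat
  proof -
    have "eventually (\<lambda>t. \<beta> (real k) t < 1 / (real k + 1)) at_top"
      by (rule order_tendstoD(2)[OF classKL_tendsto_0[OF KL]]) auto
    then show ?thesis
      by (auto simp: eventually_at_top_linorder intro: less_imp_le)
  qed
  then obtain T where T: "\<And>k t. T k \<le> t \<Longrightarrow> \<beta> (real k) t \<le> 1 / (real k + 1)"
    by metis
  define S where "S k = (\<Sum>i\<le>k. \<bar>T i\<bar> + 1)" for k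
  have S_mono: "mono S"
    unfolding S_def by (intro monoI sum_mono2) auto
  have S_ge: "real k + 1 \<le> S k" for k
    using sum_mono[of "{..k}" "\<lambda>_. 1::real" "\<lambda>i. \<bar>T i\<bar> + 1"] by (simp add: S_def)
  have T_le_S: "T k \<le> S k" for k
    using member_le_sum[of k "{..k}" "\<lambda>i. \<bar>T i\<bar> + 1"] by (simp add: S_def)
  have "\<beta> s t \<le> 1 / (real j + 1)" if "0 \<le> s" "S j \<le> t" "S (nat \<lceil>s\<rceil>) \<le> t" for s t j
  proof -
    define k where "k = max j (nat \<lceil>s\<rceil>)"
    have "S k \<le> t"
      using that by (simp add: k_def max_def)
    have "0 \<le> t"
      using S_ge[of j] that(2) by linarith
    have "\<beta> s t \<le> \<beta> (real k) t"
      using \<open>0 \<le> t\<close> that(1) by (rule classKL_mono[OF KL]) (simp add: k_def; linarith)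
    also have "\<dots> \<le> 1 / (real k + 1)"
      using T_le_S[of k] \<open>S k \<le> t\<close> by (intro T) linarith
    also have "\<dots> \<le> 1 / (real j + 1)"
      by (simp add: k_def divide_simps)
    finally show ?thesis .
  qed
  with S_mono S_ge show ?thesis
    by (rule that)
qed

lemma mono_seq_ceiling_classN_majorant:
  fixes S :: "nat \<Rightarrow> real"
  assumes S_mono: "mono S" and S_ge: "\<And>k. 1 \<le> S k"
  obtains \<rho> where "classN \<rho>" "\<And>s. 0 \<le> s \<Longrightarrow> S (nat \<lceil>s\<rceil>) \<le> S 1 * (1 + \<rho> s)"
proof -
  have mono: "mono (\<lambda>s::real. S (nat \<lceil>s\<rceil>))"
    by (intro monoI monoD[OF S_mono] nat_mono ceiling_mono)
  have nonneg: "0 \<le> S (nat \<lceil>s\<rceil>)" for s :: real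
    using S_ge[of "nat \<lceil>s\<rceil>"] by linarith
  obtain \<rho> where \<rho>: "classN \<rho>"
    and le: "\<And>s. 0 \<le> s \<Longrightarrow> S (nat \<lceil>s\<rceil>) \<le> S (nat \<lceil>1::real\<rceil>) + \<rho> s"
    using mono_classN_majorant[OF mono nonneg] by metis
  have "S (nat \<lceil>s\<rceil>) \<le> S 1 * (1 + \<rho> s)" if "0 \<le> s" for s
    using le[OF that] S_ge[of 1] classN_nonneg[OF \<rho> that] mult_right_mono[of 1 "S 1" "\<rho> s"]
    by (simp add: algebra_simps)
  with \<rho> show ?thesis
    by (rule that)
qed

lemma classKL_rescaled_thresholds:
  assumes KL: "classKL \<beta>"
  obtains \<rho> R where "classN \<rho>" "mono R" "\<And>j. real j \<le> R j"
    "\<And>s \<tau> j. 0 \<le> s \<Longrightarrow> R j \<le> \<tau> \<Longrightarrow> \<beta> s (\<tau> * (1 + \<rho> s)) \<le> 1 / (real j + 1)"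
proof -
  obtain S where S_mono: "mono S" and S_ge: "\<And>k. real k + 1 \<le> S k"
    and decay: "\<And>s t j. 0 \<le> s \<Longrightarrow> S j \<le> t \<Longrightarrow> S (nat \<lceil>s\<rceil>) \<le> t \<Longrightarrow> \<beta> s t \<le> 1 / (real j + 1)"
    using classKL_decay_thresholds[OF KL] by metis
  have S_ge_1: "1 \<le> S k" for k
    using S_ge[of k] of_nat_0_le_iff[of k] by linarith
  obtain \<rho> where \<rho>: "classN \<rho>"
    and S_ceiling_le: "\<And>s. 0 \<le> s \<Longrightarrow> S (nat \<lceil>s\<rceil>) \<le> S 1 * (1 + \<rho> s)"
    using mono_seq_ceiling_classN_majorant[OF S_mono S_ge_1] by metis
  define C where "C = S 1"
  have C_le: "S j \<le> C * S j" "C \<le> C * S j" for j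
    using S_ge_1[of 1] S_ge_1[of j] mult_right_mono[of 1 C "S j"] mult_left_mono[of 1 "S j" C]
    by (simp_all add: C_def)
  txt \<open>After rescaling time by 1 + \<rho> s, the threshold S j is passed at time C * S j,
    whatever s is.\<close>
  have "\<beta> s (\<tau> * (1 + \<rho> s)) \<le> 1 / (real j + 1)" if s: "0 \<le> s" and "C * S j \<le> \<tau>" for s \<tau> j
  proof -
    have "0 \<le> \<rho> s"
      using classN_nonneg[OF \<rho> s] .
    have "0 \<le> \<tau>" "C \<le> \<tau>" "S j \<le> \<tau>"
      using \<open>C * S j \<le> \<tau>\<close> C_le[of j] S_ge_1[of j] by linarith+
    have S_j: "S j \<le> \<tau> * (1 + \<rho> s)"
      using \<open>S j \<le> \<tau>\<close> \<open>0 \<le> \<tau>\<close> \<open>0 \<le> \<rho> s\<close> mult_left_mono[of 1 "1 + \<rho> s" \<tau>] by simp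
    have "S 1 * (1 + \<rho> s) \<le> \<tau> * (1 + \<rho> s)"
      using \<open>C \<le> \<tau>\<close> \<open>0 \<le> \<rho> s\<close> unfolding C_def by (intro mult_right_mono) auto
    then have "S (nat \<lceil>s\<rceil>) \<le> \<tau> * (1 + \<rho> s)"
      using S_ceiling_le[OF s] by linarith
    with s S_j show ?thesis
      by (rule decay)
  qed
  moreover have "mono (\<lambda>j. C * S j)"
    using S_ge_1[of 1] by (intro monoI mult_left_mono monoD[OF S_mono]) (simp_all add: C_def)
  moreover have "real j \<le> C * S j" for j
    using S_ge[of j] C_le(1)[of j] by linarith
  ultimately show ?thesis
    using \<rho> that by blast
qed

lemma classKL_uniform_decay:
  assumes KL: "classKL \<beta>"
  obtains \<rho> D where "classN \<rho>" "classN D" "filterlim D at_top at_top"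
    "\<And>s \<tau>. 0 \<le> s \<Longrightarrow> 0 \<le> \<tau> \<Longrightarrow> D \<tau> * \<beta> s (\<tau> * (1 + \<rho> s)) \<le> 1"
proof -
  obtain \<rho> R where \<rho>: "classN \<rho>" and R: "mono R" "\<And>j. real j \<le> R j"
    and decay: "\<And>s \<tau> j. 0 \<le> s \<Longrightarrow> R j \<le> \<tau> \<Longrightarrow> \<beta> s (\<tau> * (1 + \<rho> s)) \<le> 1 / (real j + 1)"
    using classKL_rescaled_thresholds[OF KL] by metis
  define n where "n = threshold_count R"
  have n: "mono n" "\<And>t. 0 \<le> t \<Longrightarrow> 0 \<le> n t" "filterlim n at_top at_top"
    unfolding n_def using mono_threshold_count[OF R(2)] filterlim_threshold_count[OF R(2,1)]
    by (simp_all add: threshold_count_def)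
  define D where "D = running_average n"
  have "D \<tau> * \<beta> s (\<tau> * (1 + \<rho> s)) \<le> 1" if "0 \<le> s" "0 \<le> \<tau>" for s \<tau>
  proof -
    have "0 \<le> \<beta> s (\<tau> * (1 + \<rho> s))"
      using that classN_nonneg[OF \<rho> that(1)] by (intro classKL_nonneg[OF KL]) auto
    then have "D \<tau> * \<beta> s (\<tau> * (1 + \<rho> s)) \<le> n \<tau> * \<beta> s (\<tau> * (1 + \<rho> s))"
      using running_average_le[OF n(1,2) that(2)] by (intro mult_right_mono) (simp_all add: D_def)
    also have "\<dots> \<le> 1"
      unfolding n_def using decay[OF that(1)] by (rule threshold_count_mult_le_1[OF R(2)])
    finally show ?thesis .
  qed
  with \<rho> classN_running_average[OF n(1,2)] filterlim_running_average[OF n(1,2,3)] show ?thesis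
    unfolding D_def by (rule that)
qed

lemma rescaled_KL_bound_of_IOS_OL_bounds:
  assumes KL: "classKL \<beta>" and \<gamma>: "classN \<gamma>" and \<sigma>: "classN \<sigma>"
  obtains \<beta>' \<rho> \<gamma>' where "classKL \<beta>'" "classN \<rho>" "classN \<gamma>'"
    "\<And>r s t v y. 0 \<le> r \<Longrightarrow> 0 \<le> s \<Longrightarrow> 0 \<le> t \<Longrightarrow> 0 \<le> v \<Longrightarrow>
      y \<le> \<beta> s t + \<gamma> v \<Longrightarrow> y \<le> max (\<sigma> r) (\<sigma> v) \<Longrightarrow> y \<le> \<beta>' r (t / (1 + \<rho> s)) + \<gamma>' v"
proof -
  obtain \<rho> D where \<rho>: "classN \<rho>" and D: "classN D" "filterlim D at_top at_top"
    and decay: "\<And>s \<tau>. 0 \<le> s \<Longrightarrow> 0 \<le> \<tau> \<Longrightarrow> D \<tau> * \<beta> s (\<tau> * (1 + \<rho> s)) \<le> 1"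
    using classKL_uniform_decay[OF KL] by metis
  define \<beta>' where "\<beta>' r \<tau> = 2 * (\<sigma> r + r) / (1 + (\<sigma> r + r) * D \<tau>)" for r \<tau>
  have "classKL \<beta>'"
    unfolding \<beta>'_def
  proof (rule classKL_comp_time_change[OF classKL_harmonic_mean classK_add_id[OF \<sigma>]])
    have "continuous_on ({0..} \<times> {0..}) (\<lambda>p::real \<times> real. D (snd p))"
      by (rule continuous_on_compose2[OF classN_continuous[OF D(1)]
            continuous_on_snd[OF continuous_on_id]]) auto
    then show "continuous_on ({0..} \<times> {0..}) (\<lambda>(s::real, t). D t)"
      by (simp add: case_prod_beta')
  qed (use D classN_nonneg classN_mono in auto)
  have bound: "y \<le> \<beta>' r (t / (1 + \<rho> s)) + (\<gamma> v + \<sigma> v)"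
    if "0 \<le> r" "0 \<le> s" "0 \<le> t" "0 \<le> v" "y \<le> \<beta> s t + \<gamma> v" "y \<le> max (\<sigma> r) (\<sigma> v)"
    for r s t v y
  proof -
    define \<tau> where "\<tau> = t / (1 + \<rho> s)"
    have "0 < 1 + \<rho> s"
      using classN_nonneg[OF \<rho> that(2)] by simp
    then have "0 \<le> \<tau>" and t_eq: "t = \<tau> * (1 + \<rho> s)"
      using that(3) by (simp_all add: \<tau>_def)
    have "0 \<le> \<sigma> r" "0 \<le> \<sigma> v" "0 \<le> \<gamma> v"
      using that classN_nonneg[OF \<sigma>] classN_nonneg[OF \<gamma>] by auto
    then have "y \<le> min (\<beta> s t) (\<sigma> r + r) + \<gamma> v + \<sigma> v"
      using that by (auto simp: min_def max_def split: if_split_asm)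
    also have "min (\<beta> s t) (\<sigma> r + r) \<le> \<beta>' r \<tau>"
      unfolding \<beta>'_def using \<open>0 \<le> \<sigma> r\<close> that(1) D(1) \<open>0 \<le> \<tau>\<close> decay[OF that(2) \<open>0 \<le> \<tau>\<close>]
      by (intro min_le_harmonic_mean) (auto simp: t_eq classN_nonneg mult.commute)
    finally show ?thesis
      by (simp add: \<tau>_def)
  qed
  from \<open>classKL \<beta>'\<close> \<rho> classN_add[OF \<gamma> \<sigma>] bound show ?thesis
    by (rule that)
qed

section \<open>Output estimates\<close>

lemma xnorm_nonneg:
  assumes "0 < \<theta>" "\<xi> \<in> Xspace \<theta>"
  shows "0 \<le> xnorm \<theta> \<xi>"
proof -
  have "continuous_on {-\<theta>..0} (\<lambda>s. norm (\<xi> s))"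
    using assms(2) unfolding Xspace_def by (intro continuous_on_norm) simp
  then have "bdd_above ((\<lambda>s. norm (\<xi> s)) ` {-\<theta>..0})"
    by (intro bounded_imp_bdd_above compact_imp_bounded compact_continuous_image) auto
  then have "norm (\<xi> 0) \<le> xnorm \<theta> \<xi>"
    unfolding xnorm_def using assms(1) by (intro cSUP_upper) auto
  then show ?thesis
    using norm_ge_zero order_trans by blast
qed

lemma unorm_nonneg:
  assumes "ess_bounded u"
  shows "0 \<le> unorm u"
proof -
  obtain B where "AE t in lebesgue. 0 \<le> t \<longrightarrow> norm (u t) \<le> B"
    using assms unfolding ess_bounded_def by blast
  then have "AE t in lebesgue. 0 \<le> t \<longrightarrow> norm (u t) \<le> max B 0"
    by (rule eventually_mono) auto
  then have "{B. 0 \<le> B \<and> (AE t in lebesgue. 0 \<le> t \<longrightarrow> norm (u t) \<le> B)} \<noteq> {}"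
    by (intro exI[of _ "max B 0"] notI) auto
  then show ?thesis
    unfolding unorm_def by (rule cInf_greatest) auto
qed

definition output_estimate ::
  "real \<Rightarrow> ((real \<Rightarrow> 'a::euclidean_space) \<Rightarrow> 'b::euclidean_space \<Rightarrow> 'a) \<Rightarrow>
   ((real \<Rightarrow> 'a) \<Rightarrow> 'c::euclidean_space) \<Rightarrow> (real \<Rightarrow> real \<Rightarrow> real \<Rightarrow> real \<Rightarrow> real) \<Rightarrow> bool" where
  "output_estimate \<theta> f h B \<longleftrightarrow>
     (\<forall>\<xi>\<in>Xspace \<theta>. \<forall>u\<in>Mspace. ess_bounded u \<longrightarrow> (\<forall>x. is_solution \<theta> f \<xi> u x \<longrightarrow>
        (\<forall>t\<ge>0. norm (h (seg \<theta> x t)) \<le> B (norm (h \<xi>)) (xnorm \<theta> \<xi>) t (unorm u))))"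

lemma output_estimate_combine:
  assumes "0 < \<theta>" and h_le: "\<forall>\<xi>\<in>Xspace \<theta>. norm (h \<xi>) \<le> \<pi> (xnorm \<theta> \<xi>)"
    and B1: "output_estimate \<theta> f h B1" and B2: "output_estimate \<theta> f h B2"
    and B3: "\<And>r s t v y. 0 \<le> r \<Longrightarrow> r \<le> \<pi> s \<Longrightarrow> 0 \<le> s \<Longrightarrow> 0 \<le> t \<Longrightarrow> 0 \<le> v \<Longrightarrow>
      y \<le> B1 r s t v \<Longrightarrow> y \<le> B2 r s t v \<Longrightarrow> y \<le> B3 r s t v"
  shows "output_estimate \<theta> f h B3"
  unfolding output_estimate_def
proof (intro ballI impI allI)
  fix \<xi> u x and t :: real
  assume \<xi>: "\<xi> \<in> Xspace \<theta>" and "u \<in> Mspace" "ess_bounded u" "is_solution \<theta> f \<xi> u x" "0 \<le> t"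
  with B1 B2 h_le show "norm (h (seg \<theta> x t)) \<le> B3 (norm (h \<xi>)) (xnorm \<theta> \<xi>) t (unorm u)"
    unfolding output_estimate_def
    by (intro B3 norm_ge_zero xnorm_nonneg[OF \<open>0 < \<theta>\<close> \<xi>] unorm_nonneg) auto
qed

lemma rescaled_estimate_if_OL_IOS_estimates:
  assumes "0 < \<theta>" and h_le: "\<forall>\<xi>\<in>Xspace \<theta>. norm (h \<xi>) \<le> \<pi> (xnorm \<theta> \<xi>)"
    and "classKL \<beta>" "classN \<gamma>" "classN \<sigma>"
    and IOS: "output_estimate \<theta> f h (\<lambda>r s t v. \<beta> s t + \<gamma> v)"
    and OL: "output_estimate \<theta> f h (\<lambda>r s t v. max (\<sigma> r) (\<sigma> v))"
  obtains \<beta>' \<rho> \<gamma>' where "classKL \<beta>'" "classN \<rho>" "classN \<gamma>'"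
    "output_estimate \<theta> f h (\<lambda>r s t v. \<beta>' r (t / (1 + \<rho> s)) + \<gamma>' v)"
proof -
  obtain \<beta>' \<rho> \<gamma>' where "classKL \<beta>'" "classN \<rho>" "classN \<gamma>'"
    and rescaled: "\<And>r s t v y. 0 \<le> r \<Longrightarrow> 0 \<le> s \<Longrightarrow> 0 \<le> t \<Longrightarrow> 0 \<le> v \<Longrightarrow>
      y \<le> \<beta> s t + \<gamma> v \<Longrightarrow> y \<le> max (\<sigma> r) (\<sigma> v) \<Longrightarrow> y \<le> \<beta>' r (t / (1 + \<rho> s)) + \<gamma>' v"
    using rescaled_KL_bound_of_IOS_OL_bounds[OF assms(3-5)] by metis
  have "output_estimate \<theta> f h (\<lambda>r s t v. \<beta>' r (t / (1 + \<rho> s)) + \<gamma>' v)"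
    using assms(1) h_le IOS OL by (rule output_estimate_combine) (rule rescaled)
  with \<open>classKL \<beta>'\<close> \<open>classN \<rho>\<close> \<open>classN \<gamma>'\<close> show ?thesis
    by (rule that)
qed

lemma IOS_estimate_if_rescaled_estimate:
  assumes "0 < \<theta>" and h_le: "\<forall>\<xi>\<in>Xspace \<theta>. norm (h \<xi>) \<le> \<pi> (xnorm \<theta> \<xi>)"
    and \<beta>: "classKL \<beta>" and \<rho>: "classN \<rho>"
    and rescaled: "output_estimate \<theta> f h (\<lambda>r s t v. \<beta> r (t / (1 + \<rho> s)) + \<gamma> v)"
  shows "output_estimate \<theta> f h (\<lambda>r s t v. \<beta> (\<pi> s + s) (t / (1 + \<rho> s)) + \<gamma> v)"
  using assms(1) h_le rescaled rescaled
proof (rule output_estimate_combine)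
  fix r s t v y
  assume "0 \<le> r" "r \<le> \<pi> s" "0 \<le> s" "0 \<le> t" "y \<le> \<beta> r (t / (1 + \<rho> s)) + \<gamma> v"
  moreover have "0 \<le> t / (1 + \<rho> s)"
    using classN_nonneg[OF \<rho> \<open>0 \<le> s\<close>] \<open>0 \<le> t\<close> by simp
  ultimately show "y \<le> \<beta> (\<pi> s + s) (t / (1 + \<rho> s)) + \<gamma> v"
    using classKL_mono[OF \<beta>, of "t / (1 + \<rho> s)" r "\<pi> s + s"] by linarith
qed

lemma OL_estimate_if_rescaled_estimate:
  assumes "0 < \<theta>" and h_le: "\<forall>\<xi>\<in>Xspace \<theta>. norm (h \<xi>) \<le> \<pi> (xnorm \<theta> \<xi>)"
    and \<beta>: "classKL \<beta>" and \<rho>: "classN \<rho>" and \<gamma>: "classN \<gamma>"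
    and rescaled: "output_estimate \<theta> f h (\<lambda>r s t v. \<beta> r (t / (1 + \<rho> s)) + \<gamma> v)"
  shows "output_estimate \<theta> f h (\<lambda>r s t v. max (2 * (\<beta> r 0 + \<gamma> r)) (2 * (\<beta> v 0 + \<gamma> v)))"
  using assms(1) h_le rescaled rescaled
proof (rule output_estimate_combine)
  fix r s t v y
  assume "0 \<le> r" "0 \<le> s" "0 \<le> t" "0 \<le> v" "y \<le> \<beta> r (t / (1 + \<rho> s)) + \<gamma> v"
  moreover have "0 \<le> t / (1 + \<rho> s)"
    using classN_nonneg[OF \<rho> \<open>0 \<le> s\<close>] \<open>0 \<le> t\<close> by simp
  ultimately show "y \<le> max (2 * (\<beta> r 0 + \<gamma> r)) (2 * (\<beta> v 0 + \<gamma> v))"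
    using classKL_add_classN_le_max[OF \<beta> \<gamma>] by fastforce
qed

lemma OL_IOS_estimates_iff_rescaled_estimate:
  assumes "0 < \<theta>" and \<pi>: "classN \<pi>" and h_le: "\<forall>\<xi>\<in>Xspace \<theta>. norm (h \<xi>) \<le> \<pi> (xnorm \<theta> \<xi>)"
  shows "(\<exists>\<beta> \<gamma> \<sigma>. classKL \<beta> \<and> classN \<gamma> \<and> classN \<sigma> \<and>
            output_estimate \<theta> f h (\<lambda>r s t v. \<beta> s t + \<gamma> v) \<and>
            output_estimate \<theta> f h (\<lambda>r s t v. max (\<sigma> r) (\<sigma> v)))
    \<longleftrightarrow> (\<exists>\<beta> \<rho> \<gamma>. classKL \<beta> \<and> classN \<rho> \<and> classN \<gamma> \<and>
            output_estimate \<theta> f h (\<lambda>r s t v. \<beta> r (t / (1 + \<rho> s)) + \<gamma> v))"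
    (is "?OL_IOS \<longleftrightarrow> ?rescaled")
proof
  assume ?OL_IOS
  then show ?rescaled
    using rescaled_estimate_if_OL_IOS_estimates[OF assms(1) h_le] by metis
next
  assume ?rescaled
  then obtain \<beta> \<rho> \<gamma> where \<beta>: "classKL \<beta>" and \<rho>: "classN \<rho>" and \<gamma>: "classN \<gamma>"
    and rescaled: "output_estimate \<theta> f h (\<lambda>r s t v. \<beta> r (t / (1 + \<rho> s)) + \<gamma> v)"
    by blast
  have "classKL (\<lambda>s t. \<beta> (\<pi> s + s) (t / (1 + \<rho> s)))"
    by (rule classKL_time_rescaled[OF \<beta> classK_add_id[OF \<pi>] \<rho>])
  moreover have "classN (\<lambda>s. 2 * (\<beta> s 0 + \<gamma> s))"
    by (intro classN_cmult classN_add classKL_classN[OF \<beta>] \<gamma>) simp_all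
  ultimately show ?OL_IOS
    using \<gamma> IOS_estimate_if_rescaled_estimate[OF assms(1) h_le \<beta> \<rho> rescaled]
      OL_estimate_if_rescaled_estimate[OF assms(1) h_le \<beta> \<rho> \<gamma> rescaled]
    by blast
qed

theorem proposition3p2:
  fixes \<theta> :: real
    and f :: "(real \<Rightarrow> 'a::euclidean_space) \<Rightarrow> 'b::euclidean_space \<Rightarrow> 'a"
    and h :: "(real \<Rightarrow> 'a) \<Rightarrow> 'c::euclidean_space"
    and \<pi> :: "real \<Rightarrow> real"
  assumes "\<theta> > 0"
    and "f_locally_lipschitz \<theta> f"
    and "f_bounded_on_bounded \<theta> f"
    and "h_continuous \<theta> h"
    and "classN \<pi>"
    and "\<forall>\<xi>\<in>Xspace \<theta>. norm (h \<xi>) \<le> \<pi> (xnorm \<theta> \<xi>)"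
    and "forward_complete \<theta> f"
  shows "OL_IOS \<theta> f h \<longleftrightarrow>
    (\<exists>\<beta> \<rho> \<gamma>. classKL \<beta> \<and> classN \<rho> \<and> classN \<gamma> \<and>
      (\<forall>\<xi>\<in>Xspace \<theta>. \<forall>u\<in>Mspace. ess_bounded u \<longrightarrow> (\<forall>x. is_solution \<theta> f \<xi> u x \<longrightarrow>
        (\<forall>t\<ge>0. norm (h (seg \<theta> x t))
            \<le> \<beta> (norm (h \<xi>)) (t / (1 + \<rho> (xnorm \<theta> \<xi>))) + \<gamma> (unorm u)))))"
proof -
  have "OL_IOS \<theta> f h \<longleftrightarrow> (\<exists>\<beta> \<gamma> \<sigma>. classKL \<beta> \<and> classN \<gamma> \<and> classN \<sigma> \<and>
      output_estimate \<theta> f h (\<lambda>r s t v. \<beta> s t + \<gamma> v) \<and>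
      output_estimate \<theta> f h (\<lambda>r s t v. max (\<sigma> r) (\<sigma> v)))"
    unfolding OL_IOS_def IOS_def output_estimate_def using assms(7) by blast
  also note OL_IOS_estimates_iff_rescaled_estimate[OF assms(1,5,6)]
  finally show ?thesis
    unfolding output_estimate_def .
qed

end
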